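(* Let $X$ be an $n\times p$ random matrix following the Bernoulli-Subgaussian model with parameter $\theta$, where $2/n\le\theta\le 1$, and let $\mu=\mathbb{E}|R_{11}|$. For any $1\le j\le p$, let $Z=(\chi_{1j}R_{1j},\dots,\chi_{nj}R_{nj})$ be the $j$-th column of $X$. Then for all $v\in\mathbb{R}^n$, $$\mathbb{E}|v^TZ|\ge\frac{\mu}{8}\sqrt{\frac{\theta}{n}}\,\|v\|_1.$$
   Context: Bernoulli-Subgaussian model with parameter $\theta$: the entries of $X$ are $X_{kl}=\chi_{kl}R_{kl}$, where all the variables $\chi_{kl},R_{kl}$ are independent, $\mathbb{P}(\chi_{kl}=1)=1-\mathbb{P}(\chi_{kl}=0)=\theta$, and the $R_{kl}$ are i.i.d. with $\mathbb{E}R_{kl}=0$, $\mu:=\mathbb{E}|R_{kl}|\ge1/10$ and $\mathbb{P}(|R_{kl}|\ge t)\le 2e^{-t^2/2}$ for all $t>0$. $\|v\|_1=\sum_l|v(l)|$. *)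

theory Defs
  imports "HOL-Probability.Probability"
begin

text \<open>Bernoulli-Subgaussian model with parameter theta for an n x p random matrix
  X with entries X k l = chi k l * R k l (indices k < n, l < p, 0-based),
  on the probability space M.\<close>

definition bernoulli_subgaussian ::
  "'a measure \<Rightarrow> nat \<Rightarrow> nat \<Rightarrow> real \<Rightarrow> (nat \<Rightarrow> nat \<Rightarrow> 'a \<Rightarrow> real)
     \<Rightarrow> (nat \<Rightarrow> nat \<Rightarrow> 'a \<Rightarrow> real) \<Rightarrow> bool" where
  "bernoulli_subgaussian M n p \<theta> chi R \<longleftrightarrow>
     prob_space M \<and>
     \<comment> \<open>all the variables chi k l, R k l are (jointly) independent\<close>
     prob_space.indep_vars M (\<lambda>_. borel)
        (\<lambda>(b, k, l). if b then chi k l else R k l) (UNIV \<times> {..<n} \<times> {..<p}) \<and>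
     \<comment> \<open>chi k l is Bernoulli(theta)\<close>
     (\<forall>k<n. \<forall>l<p. (AE \<omega> in M. chi k l \<omega> \<in> {0, 1}) \<and>
                  measure M {\<omega> \<in> space M. chi k l \<omega> = 1} = \<theta>) \<and>
     \<comment> \<open>R k l identically distributed\<close>
     (\<forall>k<n. \<forall>l<p. \<forall>k'<n. \<forall>l'<p. distr M borel (R k l) = distr M borel (R k' l')) \<and>
     \<comment> \<open>mean zero, E|R| >= 1/10, subgaussian tail\<close>
     (\<forall>k<n. \<forall>l<p. integrable M (R k l) \<and> integral\<^sup>L M (R k l) = 0 \<and>
        integral\<^sup>L M (\<lambda>\<omega>. \<bar>R k l \<omega>\<bar>) \<ge> 1/10 \<and>
        (\<forall>t>0. measure M {\<omega> \<in> space M. \<bar>R k l \<omega>\<bar> \<ge> t} \<le> 2 * exp (- t\<^sup>2 / 2)))"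

end

theory Submission
  imports Defs
begin

text \<open>For independent mean-zero summands X_k, symmetrization gives
  E|sum X_k| >= E|sum +-X_k| / 2 for every choice of signs, and averaging over all sign patterns
  Khintchine's inequality turns this into E|sum X_k| >= E (sum X_k^2)^(1/2) / (2 sqrt 3).
  For X_k = v_k chi_k R_k, Cauchy-Schwarz on the support S of the column gives
  (sum X_k^2)^(1/2) >= sum_(k in S) |v_k R_k| / sqrt |S|, and for k in S the size |S| equals
  1 + #{l ~= k. chi_l = 1}, which is independent of chi_k and R_k; Jensen's inequality for 1/sqrt
  bounds E |S|^(-1/2) below by (1 + (n - 1) theta)^(-1/2).  So
  E|v^T Z| >= mu theta ||v||_1 / (2 sqrt 3 sqrt (1 + (n - 1) theta)), and theta n >= 2 makes this
  at least mu/8 sqrt (theta/n) ||v||_1.\<close>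

definition signed_sum :: "(nat \<Rightarrow> real) \<Rightarrow> nat \<Rightarrow> nat set \<Rightarrow> real" where
  "signed_sum a n A = (\<Sum>k<n. if k \<in> A then a k else - a k)"

lemma sum_Pow_lessThan_Suc_signed_sum:
  "(\<Sum>A\<in>Pow {..<Suc n}. f (signed_sum a (Suc n) A)) =
   (\<Sum>A\<in>Pow {..<n}. f (signed_sum a n A - a n) + f (signed_sum a n A + a n))"
proof -
  have without_n: "signed_sum a (Suc n) A = signed_sum a n A - a n" if "A \<subseteq> {..<n}" for A
    using that unfolding signed_sum_def by auto
  have with_n: "signed_sum a (Suc n) (insert n A) = signed_sum a n A + a n" if "A \<subseteq> {..<n}" for A
  proof -
    have "(\<Sum>k<n. if k \<in> insert n A then a k else - a k) = (\<Sum>k<n. if k \<in> A then a k else - a k)"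
      by (rule sum.cong) auto
    then show ?thesis unfolding signed_sum_def by simp
  qed
  have Pow_Suc: "Pow {..<Suc n} = Pow {..<n} \<union> insert n ` Pow {..<n}"
    by (simp add: lessThan_Suc Pow_insert)
  have inj: "inj_on (insert n) (Pow {..<n})"
    by (rule inj_onI) (auto simp: insert_ident subset_eq)
  have "(\<Sum>A\<in>Pow {..<Suc n}. f (signed_sum a (Suc n) A)) =
     (\<Sum>A\<in>Pow {..<n}. f (signed_sum a (Suc n) A)) +
     (\<Sum>A\<in>Pow {..<n}. f (signed_sum a (Suc n) (insert n A)))"
    unfolding Pow_Suc
    by (subst sum.union_disjoint) (auto simp: sum.reindex[OF inj])
  also have "\<dots> = (\<Sum>A\<in>Pow {..<n}. f (signed_sum a n A - a n)) +
                  (\<Sum>A\<in>Pow {..<n}. f (signed_sum a n A + a n))"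
    by (intro arg_cong2[where f="(+)"] sum.cong) (auto simp: without_n with_n)
  finally show ?thesis by (simp add: sum.distrib)
qed

lemma sum_signed_sum_power2:
  "(\<Sum>A\<in>Pow {..<n}. (signed_sum a n A)^2) = 2^n * (\<Sum>k<n. (a k)^2)"
proof (induction n)
  case 0 then show ?case by (simp add: signed_sum_def)
next
  case (Suc n)
  have "(\<Sum>A\<in>Pow {..<Suc n}. (signed_sum a (Suc n) A)^2) =
        (\<Sum>A\<in>Pow {..<n}. 2 * (signed_sum a n A)^2 + 2 * (a n)^2)"
    by (subst sum_Pow_lessThan_Suc_signed_sum) (simp add: power2_eq_square algebra_simps)
  also have "\<dots> = 2 * (\<Sum>A\<in>Pow {..<n}. (signed_sum a n A)^2) + 2 * 2^n * (a n)^2"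
    by (simp add: sum.distrib sum_distrib_left card_Pow)
  finally show ?case using Suc by (simp add: algebra_simps)
qed

lemma sum_signed_sum_power4_le:
  "(\<Sum>A\<in>Pow {..<n}. (signed_sum a n A)^4) \<le> 3 * 2^n * (\<Sum>k<n. (a k)^2)^2"
proof (induction n)
  case 0 then show ?case by (simp add: signed_sum_def)
next
  case (Suc n)
  let ?Q = "\<Sum>k<n. (a k)^2"
  have binomial: "(s - b)^4 + (s + b)^4 = 2 * s^4 + 12 * b^2 * s^2 + 2 * b^4" for s b :: real
    by (simp add: power_numeral_reduce power2_eq_square algebra_simps)
  have "(\<Sum>A\<in>Pow {..<Suc n}. (signed_sum a (Suc n) A)^4) =
        (\<Sum>A\<in>Pow {..<n}. 2 * (signed_sum a n A)^4 + 12 * (a n)^2 * (signed_sum a n A)^2 + 2 * (a n)^4)"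
    by (subst sum_Pow_lessThan_Suc_signed_sum) (simp add: binomial)
  also have "\<dots> = 2 * (\<Sum>A\<in>Pow {..<n}. (signed_sum a n A)^4)
        + 12 * (a n)^2 * (\<Sum>A\<in>Pow {..<n}. (signed_sum a n A)^2) + 2 * 2^n * (a n)^4"
    by (simp add: sum.distrib sum_distrib_left card_Pow)
  also have "\<dots> \<le> 2 * (3 * 2^n * ?Q^2) + 12 * (a n)^2 * (2^n * ?Q) + 2 * 2^n * (a n)^4"
    using Suc by (simp add: sum_signed_sum_power2)
  also have "\<dots> \<le> 3 * 2^(Suc n) * (?Q + (a n)^2)^2"
  proof -
    have "0 \<le> (a n)^4 * 2^n" by simp
    then show ?thesis by (simp add: power2_eq_square power_numeral_reduce algebra_simps)
  qed
  finally show ?case by simp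
qed

lemma quadratic_minus_quartic_le_abs:
  fixes x t :: real
  assumes t: "t > 0"
  shows "x^2 / t - (4/27) * x^4 / t^3 \<le> \<bar>x\<bar>"
proof -
  let ?y = "\<bar>x\<bar>"
  have "0 \<le> ?y * (2 * ?y - 3 * t)^2 * (?y + 3 * t)" using t by simp
  also have "?y * (2 * ?y - 3 * t)^2 * (?y + 3 * t) = 27 * t^3 * ?y - 27 * t^2 * ?y^2 + 4 * ?y^4"
    by (simp add: power2_eq_square power_numeral_reduce algebra_simps)
  finally have "27 * t^2 * x^2 - 4 * x^4 \<le> 27 * t^3 * \<bar>x\<bar>"
    by (simp add: power2_abs power4_eq_xxxx[symmetric] power_abs)
  then show ?thesis
    using t by (simp add: field_simps power_numeral_reduce)
qed

text \<open>Khintchine's inequality with constant 1/sqrt 3, from the second and fourth moments of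
  the Rademacher sum via the pointwise bound above with t = 2 sqrt Q / sqrt 3.\<close>
lemma khintchine_lower_bound:
  "2^n * L2_set a {..<n} / sqrt 3 \<le> (\<Sum>A\<in>Pow {..<n}. \<bar>signed_sum a n A\<bar>)"
proof (cases "(\<Sum>k<n. (a k)^2) = 0")
  case True then show ?thesis by (simp add: L2_set_def sum_nonneg)
next
  case False
  define Q where "Q = (\<Sum>k<n. (a k)^2)"
  have Q: "Q > 0" using False unfolding Q_def by (simp add: less_le sum_nonneg)
  define t where "t = 2 * sqrt Q / sqrt 3"
  have t: "t > 0" using Q by (simp add: t_def)
  have "(4/27) * (\<Sum>A\<in>Pow {..<n}. (signed_sum a n A)^4) / t^3 \<le> (4/27) * (3 * 2^n * Q^2) / t^3"
    using sum_signed_sum_power4_le[of a n] t unfolding Q_def by (intro divide_right_mono) auto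
  then have "2^n * Q / t - (4/27) * (3 * 2^n * Q^2) / t^3
        \<le> (\<Sum>A\<in>Pow {..<n}. (signed_sum a n A)^2 / t - (4/27) * (signed_sum a n A)^4 / t^3)"
    by (simp add: sum_subtractf sum_divide_distrib[symmetric] sum_distrib_left
        sum_signed_sum_power2 Q_def)
  also have "\<dots> \<le> (\<Sum>A\<in>Pow {..<n}. \<bar>signed_sum a n A\<bar>)"
    by (intro sum_mono quadratic_minus_quartic_le_abs t)
  finally have "2^n * Q / t - (4/27) * (3 * 2^n * Q^2) / t^3 \<le> (\<Sum>A\<in>Pow {..<n}. \<bar>signed_sum a n A\<bar>)" .
  moreover have "2^n * Q / t - (4/27) * (3 * 2^n * Q^2) / t^3 = 2^n * sqrt Q / sqrt 3"
  proof -
    have "sqrt Q * sqrt Q = Q" "sqrt 3 * sqrt 3 = (3::real)" using Q by simp_all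
    then show ?thesis
      using Q unfolding t_def by (simp add: field_simps power2_eq_square power_numeral_reduce)
  qed
  ultimately show ?thesis by (simp add: L2_set_def Q_def)
qed

lemma inverse_sqrt_ge_tangent:
  fixes y C :: real
  assumes y: "y > 0" and C: "C > 0"
  shows "1 / sqrt C * (3/2 - y / (2 * C)) \<le> 1 / sqrt y"
proof -
  define r s where "r = sqrt y" and "s = sqrt C"
  have r: "r > 0" and s: "s > 0" using y C by (auto simp: r_def s_def)
  have "y = r * r" "C = s * s" using y C by (simp_all add: r_def s_def)
  moreover have "0 \<le> (r - s)^2 * (r + 2 * s)" using r s by simp
  then have "1 / s * (3/2 - r * r / (2 * (s * s))) \<le> 1 / r"
    using r s by (simp add: field_simps power2_eq_square algebra_simps)
  ultimately show ?thesis by (simp add: r_def s_def)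
qed

lemma sum_abs_div_sqrt_count_le_L2_set:
  fixes b c :: "nat \<Rightarrow> real"
  assumes c01: "\<And>k. k < n \<Longrightarrow> c k \<in> {0, 1}"
  shows "(\<Sum>k<n. \<bar>b k\<bar> * c k / sqrt (1 + (\<Sum>l\<in>{..<n}-{k}. c l))) \<le> L2_set (\<lambda>k. b k * c k) {..<n}"
proof -
  define K where "K = {k. k < n \<and> c k = 1}"
  have K: "K \<subseteq> {..<n}" by (auto simp: K_def)
  have on_K: "(\<Sum>k<n. f k * c k) = (\<Sum>k\<in>K. f k)" for f :: "nat \<Rightarrow> real"
  proof -
    have "(\<Sum>k<n. f k * c k) = (\<Sum>k<n. if k \<in> K then f k else 0)"
      by (rule sum.cong) (use c01 in \<open>auto simp: K_def\<close>)
    then show ?thesis using K by (simp add: sum.If_cases Int_absorb1)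
  qed
  have count: "1 + (\<Sum>l\<in>{..<n}-{k}. c l) = real (card K)" if "k \<in> K" for k
  proof -
    have "(\<Sum>l<n. c l) = c k + (\<Sum>l\<in>{..<n}-{k}. c l)"
      using that K by (subst sum.remove[of _ k]) auto
    then show ?thesis using that on_K[of "\<lambda>_. 1"] by (simp add: K_def)
  qed
  have lhs: "(\<Sum>k<n. \<bar>b k\<bar> * c k / sqrt (1 + (\<Sum>l\<in>{..<n}-{k}. c l))) = (\<Sum>k\<in>K. \<bar>b k\<bar>) / sqrt (card K)"
    using on_K[of "\<lambda>k. \<bar>b k\<bar> / sqrt (1 + (\<Sum>l\<in>{..<n}-{k}. c l))"]
    by (simp add: count sum_divide_distrib)
  have "(\<Sum>k<n. (b k * c k)^2) = (\<Sum>k<n. (b k)^2 * c k)"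
  proof (rule sum.cong)
    fix k assume "k \<in> {..<n}"
    then have "c k \<in> {0, 1}" using c01 by simp
    then show "(b k * c k)^2 = (b k)^2 * c k" by (auto simp: power_mult_distrib)
  qed simp
  then have rhs: "L2_set (\<lambda>k. b k * c k) {..<n} = sqrt (\<Sum>k\<in>K. (b k)^2)"
    unfolding L2_set_def on_K by simp
  have "(\<Sum>k\<in>K. \<bar>b k\<bar>) \<le> sqrt (\<Sum>k\<in>K. (b k)^2) * sqrt (card K)"
    using sum_squared_le_sum_of_squares[of "\<lambda>k. \<bar>b k\<bar>" K]
    by (simp add: real_le_rsqrt flip: real_sqrt_mult)
  then show ?thesis
    unfolding lhs rhs by (cases "card K = 0") (auto simp: divide_le_eq sum_nonneg)
qed

lemma sqrt_div_le_bernoulli_constant: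
  fixes \<theta> :: real and n :: nat
  assumes n: "n > 0" and \<theta>: "2 / real n \<le> \<theta>"
  shows "sqrt (\<theta> / real n) / 8 \<le> \<theta> / (2 * sqrt 3 * sqrt (1 + (real n - 1) * \<theta>))"
proof -
  define C where "C = 1 + (real n - 1) * \<theta>"
  have \<theta>_pos: "\<theta> > 0" using \<theta> n by (smt (verit) divide_pos_pos of_nat_0_less_iff)
  have "(real n - 1) * \<theta> \<ge> 0" using n \<theta>_pos by simp
  then have "0 < C" unfolding C_def by linarith
  moreover have "real n * \<theta> \<ge> 2" using \<theta> n by (simp add: divide_le_eq mult.commute)
  then have "12 * C \<le> 64 * real n * \<theta>"
    using \<theta>_pos unfolding C_def by (auto simp: algebra_simps)
  ultimately have C: "0 < C" "12 * C \<le> 64 * real n * \<theta>" by blast+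
  have "\<theta> / (64 * real n) \<le> \<theta>^2 / (12 * C)"
    using mult_left_mono[OF C(2), of \<theta>] C n \<theta>_pos by (simp add: field_simps power2_eq_square)
  then have "(sqrt (\<theta> / real n) / 8)^2 \<le> (\<theta> / (2 * sqrt 3 * sqrt C))^2"
    using \<theta>_pos C by (simp add: power_divide power_mult_distrib)
  then show ?thesis
    unfolding C_def[symmetric] by (rule power2_le_imp_le) (use \<theta>_pos C in auto)
qed

lemma (in prob_space) indep_var_of_disjoint_blocks:
  fixes Y :: "'i \<Rightarrow> 'a \<Rightarrow> real"
  assumes ind: "indep_vars (\<lambda>_. borel) Y J" and AB: "A \<inter> B = {}" "A \<subseteq> J" "B \<subseteq> J"
    and f: "f \<in> borel_measurable (PiM A (\<lambda>_. borel))" and g: "g \<in> borel_measurable (PiM B (\<lambda>_. borel))"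
    and F: "F = (\<lambda>\<omega>. f (restrict (\<lambda>i. Y i \<omega>) A))" and G: "G = (\<lambda>\<omega>. g (restrict (\<lambda>i. Y i \<omega>) B))"
  shows "indep_var borel F borel G"
  using indep_var_compose[OF indep_var_restrict[OF ind AB] f g] unfolding F G comp_def .

lemma (in prob_space) indep_vars_reindex:
  assumes ind: "indep_vars M' X I" and h: "inj_on h K" "h ` K \<subseteq> I"
  shows "indep_vars (\<lambda>k. M' (h k)) (\<lambda>k. X (h k)) K"
proof -
  have "indep_vars (\<lambda>k. PiM {h k} M') (\<lambda>k \<omega>. restrict (\<lambda>i. X i \<omega>) {h k}) K"
    using h by (intro indep_vars_restrict[OF ind]) (auto simp: disjoint_family_on_def inj_on_eq_iff)
  then have "indep_vars (\<lambda>k. M' (h k)) (\<lambda>k \<omega>. restrict (\<lambda>i. X i \<omega>) {h k} (h k)) K"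
    by (rule indep_vars_compose2) (rule measurable_component_singleton, simp)
  then show ?thesis by simp
qed

lemma (in prob_space) expectation_abs_le_expectation_abs_add:
  fixes X Y :: "'a \<Rightarrow> real"
  assumes ind: "indep_var borel X borel Y" and X: "integrable M X" and Y: "integrable M Y"
    and mean: "expectation Y = 0"
  shows "expectation (\<lambda>\<omega>. \<bar>X \<omega>\<bar>) \<le> expectation (\<lambda>\<omega>. \<bar>X \<omega> + Y \<omega>\<bar>)"
proof -
  have [measurable]: "X \<in> borel_measurable M" "Y \<in> borel_measurable M"
    using X Y by auto
  interpret PX: prob_space "distr M borel X" by (rule prob_space_distr) simp
  interpret PY: prob_space "distr M borel Y" by (rule prob_space_distr) simp
  interpret PXY: pair_sigma_finite "distr M borel X" "distr M borel Y" ..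
  have joint: "distr M borel X \<Otimes>\<^sub>M distr M borel Y = distr M (borel \<Otimes>\<^sub>M borel) (\<lambda>\<omega>. (X \<omega>, Y \<omega>))"
    using ind indep_var_distribution_eq by blast
  have int_pair: "integrable (distr M borel X \<Otimes>\<^sub>M distr M borel Y) (\<lambda>z. \<bar>fst z + snd z\<bar>)"
    unfolding joint by (subst integrable_distr_eq) (use X Y in auto)
  have "expectation (\<lambda>\<omega>. \<bar>X \<omega> + Y \<omega>\<bar>) = (\<integral>z. \<bar>fst z + snd z\<bar> \<partial>distr M borel X \<Otimes>\<^sub>M distr M borel Y)"
    unfolding joint by (subst integral_distr) auto
  also have "\<dots> = (\<integral>x. (\<integral>y. \<bar>x + y\<bar> \<partial>distr M borel Y) \<partial>distr M borel X)"
    using PXY.integral_fst'[OF int_pair] by simp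
  finally have fubini: "expectation (\<lambda>\<omega>. \<bar>X \<omega> + Y \<omega>\<bar>) = (\<integral>x. (\<integral>y. \<bar>x + y\<bar> \<partial>distr M borel Y) \<partial>distr M borel X)" .
  have inner: "\<bar>x\<bar> \<le> (\<integral>y. \<bar>x + y\<bar> \<partial>distr M borel Y)" for x
  proof -
    have "integrable (distr M borel Y) (\<lambda>y. y)" by (subst integrable_distr_eq) (use Y in auto)
    moreover have "(\<integral>y. y \<partial>distr M borel Y) = 0" using mean by (subst integral_distr) auto
    ultimately have "(\<integral>y. x + y \<partial>distr M borel Y) = x"
      by (subst Bochner_Integration.integral_add) (auto simp: PY.prob_space[simplified])
    then show ?thesis using integral_abs_bound[of "distr M borel Y" "\<lambda>y. x + y"] by simp
  qed
  have "expectation (\<lambda>\<omega>. \<bar>X \<omega>\<bar>) = (\<integral>x. \<bar>x\<bar> \<partial>distr M borel X)" by (subst integral_distr) auto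
  also have "\<dots> \<le> (\<integral>x. (\<integral>y. \<bar>x + y\<bar> \<partial>distr M borel Y) \<partial>distr M borel X)"
  proof (rule integral_mono[OF _ _ inner])
    show "integrable (distr M borel X) (\<lambda>x. \<bar>x\<bar>)" by (subst integrable_distr_eq) (use X in auto)
    show "integrable (distr M borel X) (\<lambda>x. \<integral>y. \<bar>x + y\<bar> \<partial>distr M borel Y)"
      using PXY.integrable_fst'[OF int_pair] by simp
  qed
  finally show ?thesis unfolding fubini .
qed

text \<open>Symmetrization: the split S = S_A + S_B into independent mean-zero parts gives
  E|S_A - S_B| <= E|S_A| + E|S_B| <= 2 E|S_A + S_B|.\<close>
lemma (in prob_space) expectation_abs_signed_sum_le:
  fixes X :: "nat \<Rightarrow> 'a \<Rightarrow> real"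
  assumes ind: "indep_vars (\<lambda>_. borel) X {..<n}"
    and int: "\<And>k. k < n \<Longrightarrow> integrable M (X k)" and mean: "\<And>k. k < n \<Longrightarrow> expectation (X k) = 0"
    and A: "A \<subseteq> {..<n}"
  shows "expectation (\<lambda>\<omega>. \<bar>signed_sum (\<lambda>k. X k \<omega>) n A\<bar>) \<le> 2 * expectation (\<lambda>\<omega>. \<bar>\<Sum>k<n. X k \<omega>\<bar>)"
proof -
  define S where "S B \<omega> = (\<Sum>k\<in>B. X k \<omega>)" for B \<omega>
  let ?B = "{..<n} - A"
  have int_S: "integrable M (S B)" and mean_S: "expectation (S B) = 0" if "B \<subseteq> {..<n}" for B
    using that int mean unfolding S_def by (auto simp: subset_eq)
  have indep_S: "indep_var borel (S B) borel (S B')"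
    if "B \<inter> B' = {}" "B \<subseteq> {..<n}" "B' \<subseteq> {..<n}" for B B'
    by (rule indep_var_of_disjoint_blocks[OF ind that, where f="\<lambda>y. \<Sum>k\<in>B. y k" and g="\<lambda>y. \<Sum>k\<in>B'. y k"])
       (auto simp: S_def fun_eq_iff)
  have sum_eq: "(\<Sum>k<n. X k \<omega>) = S A \<omega> + S ?B \<omega>" for \<omega>
    using A unfolding S_def by (simp add: sum.subset_diff[of A "{..<n}"])
  have signed_eq: "signed_sum (\<lambda>k. X k \<omega>) n A = S A \<omega> - S ?B \<omega>" for \<omega>
    using A unfolding signed_sum_def S_def by (simp add: sum.If_cases Int_absorb1 Diff_eq sum_negf)
  have int_AB: "integrable M (S A)" "integrable M (S ?B)" using A int_S by auto
  have "expectation (\<lambda>\<omega>. \<bar>S A \<omega> - S ?B \<omega>\<bar>) \<le> expectation (\<lambda>\<omega>. \<bar>S A \<omega>\<bar> + \<bar>S ?B \<omega>\<bar>)"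
    using int_AB by (intro integral_mono) auto
  also have "\<dots> = expectation (\<lambda>\<omega>. \<bar>S A \<omega>\<bar>) + expectation (\<lambda>\<omega>. \<bar>S ?B \<omega>\<bar>)"
    using int_AB by (intro Bochner_Integration.integral_add integrable_abs)
  also have "\<dots> \<le> expectation (\<lambda>\<omega>. \<bar>S A \<omega> + S ?B \<omega>\<bar>) + expectation (\<lambda>\<omega>. \<bar>S ?B \<omega> + S A \<omega>\<bar>)"
    using A by (intro add_mono expectation_abs_le_expectation_abs_add indep_S int_S mean_S) auto
  finally show ?thesis by (simp add: sum_eq signed_eq add.commute)
qed

lemma integrable_L2_set:
  fixes X :: "'i \<Rightarrow> 'a \<Rightarrow> real"
  assumes int: "\<And>i. i \<in> I \<Longrightarrow> integrable M (X i)"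
  shows "integrable M (\<lambda>\<omega>. L2_set (\<lambda>i. X i \<omega>) I)"
proof (rule Bochner_Integration.integrable_bound)
  show "integrable M (\<lambda>\<omega>. \<Sum>i\<in>I. \<bar>X i \<omega>\<bar>)" using int by auto
  show "(\<lambda>\<omega>. L2_set (\<lambda>i. X i \<omega>) I) \<in> borel_measurable M"
    unfolding L2_set_def using int by (auto intro!: borel_measurable_sqrt)
  show "AE \<omega> in M. norm (L2_set (\<lambda>i. X i \<omega>) I) \<le> norm (\<Sum>i\<in>I. \<bar>X i \<omega>\<bar>)"
    by (simp add: L2_set_le_sum_abs L2_set_nonneg sum_nonneg)
qed

lemma (in prob_space) expectation_L2_set_le:
  fixes X :: "nat \<Rightarrow> 'a \<Rightarrow> real"
  assumes ind: "indep_vars (\<lambda>_. borel) X {..<n}"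
    and int: "\<And>k. k < n \<Longrightarrow> integrable M (X k)" and mean: "\<And>k. k < n \<Longrightarrow> expectation (X k) = 0"
  shows "expectation (\<lambda>\<omega>. L2_set (\<lambda>k. X k \<omega>) {..<n}) \<le> 2 * sqrt 3 * expectation (\<lambda>\<omega>. \<bar>\<Sum>k<n. X k \<omega>\<bar>)"
proof -
  have int_signed: "integrable M (\<lambda>\<omega>. \<bar>signed_sum (\<lambda>k. X k \<omega>) n A\<bar>)" for A
    unfolding signed_sum_def
  proof (intro integrable_abs Bochner_Integration.integrable_sum)
    fix k assume "k \<in> {..<n}"
    then show "integrable M (\<lambda>\<omega>. if k \<in> A then X k \<omega> else - X k \<omega>)" using int by (cases "k \<in> A") auto
  qed
  have "integrable M (\<lambda>\<omega>. L2_set (\<lambda>k. X k \<omega>) {..<n})"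
    using int by (intro integrable_L2_set) auto
  then have "expectation (\<lambda>\<omega>. L2_set (\<lambda>k. X k \<omega>) {..<n})
      \<le> expectation (\<lambda>\<omega>. sqrt 3 / 2^n * (\<Sum>A\<in>Pow {..<n}. \<bar>signed_sum (\<lambda>k. X k \<omega>) n A\<bar>))"
  proof (intro integral_mono)
    show "L2_set (\<lambda>k. X k \<omega>) {..<n} \<le> sqrt 3 / 2^n * (\<Sum>A\<in>Pow {..<n}. \<bar>signed_sum (\<lambda>k. X k \<omega>) n A\<bar>)" for \<omega>
      using khintchine_lower_bound[of n "\<lambda>k. X k \<omega>"] by (simp add: field_simps)
  qed (use int_signed in auto)
  also have "\<dots> = sqrt 3 / 2^n * (\<Sum>A\<in>Pow {..<n}. expectation (\<lambda>\<omega>. \<bar>signed_sum (\<lambda>k. X k \<omega>) n A\<bar>))"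
    using int_signed by simp
  also have "\<dots> \<le> sqrt 3 / 2^n * (\<Sum>A\<in>Pow {..<n}. 2 * expectation (\<lambda>\<omega>. \<bar>\<Sum>k<n. X k \<omega>\<bar>))"
    by (intro mult_left_mono sum_mono expectation_abs_signed_sum_le[OF ind int mean]) auto
  also have "\<dots> = 2 * sqrt 3 * expectation (\<lambda>\<omega>. \<bar>\<Sum>k<n. X k \<omega>\<bar>)"
    by (simp add: card_Pow)
  finally show ?thesis .
qed

text \<open>Jensen's inequality for the convex function 1/sqrt, via its tangent line at E D.\<close>
lemma (in prob_space) inverse_sqrt_expectation_le:
  fixes D :: "'a \<Rightarrow> real"
  assumes D: "integrable M D" and D_ge: "AE \<omega> in M. 1 \<le> D \<omega>"
  shows "1 / sqrt (expectation D) \<le> expectation (\<lambda>\<omega>. 1 / sqrt (D \<omega>))"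
proof -
  define C where "C = expectation D"
  have "1 \<le> C" unfolding C_def using integral_mono_AE[OF integrable_const D D_ge] by (simp add: prob_space)
  then have C: "C > 0" by simp
  have "1 / sqrt C = expectation (\<lambda>\<omega>. 1 / sqrt C * (3/2 - D \<omega> / (2 * C)))"
    using D C by (simp add: prob_space C_def)
  also have "\<dots> \<le> expectation (\<lambda>\<omega>. 1 / sqrt (D \<omega>))"
  proof (rule integral_mono_AE)
    show "integrable M (\<lambda>\<omega>. 1 / sqrt C * (3/2 - D \<omega> / (2 * C)))" using D by auto
    show "integrable M (\<lambda>\<omega>. 1 / sqrt (D \<omega>))"
    proof (rule integrable_const_bound[where B=1])
      show "AE \<omega> in M. norm (1 / sqrt (D \<omega>)) \<le> 1" using D_ge by eventually_elim auto
    qed (use D in auto)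
    show "AE \<omega> in M. 1 / sqrt C * (3/2 - D \<omega> / (2 * C)) \<le> 1 / sqrt (D \<omega>)"
      using D_ge
    proof eventually_elim
      case (elim \<omega>)
      then show ?case using inverse_sqrt_ge_tangent[of "D \<omega>" C] C by simp
    qed
  qed
  finally show ?thesis unfolding C_def .
qed

lemma (in prob_space) expectation_eq_prob_of_01:
  fixes X :: "'a \<Rightarrow> real"
  assumes [measurable]: "X \<in> borel_measurable M" and X01: "AE \<omega> in M. X \<omega> \<in> {0, 1}"
  shows "expectation X = prob {\<omega> \<in> space M. X \<omega> = 1}"
proof -
  have "expectation X = expectation (indicator {\<omega> \<in> space M. X \<omega> = 1})"
    by (rule integral_cong_AE) (use X01 in \<open>auto elim!: eventually_mono simp: indicator_def\<close>)
  then show ?thesis by simp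
qed

locale bernoulli_column = prob_space +
  fixes n :: nat and \<theta> \<mu> :: real and chi R :: "nat \<Rightarrow> 'a \<Rightarrow> real"
  assumes indep_entries: "indep_vars (\<lambda>_. borel) (\<lambda>(b, k). if b then chi k else R k) (UNIV \<times> {..<n})"
    and chi_01: "\<And>k. k < n \<Longrightarrow> AE \<omega> in M. chi k \<omega> \<in> {0, 1}"
    and prob_chi: "\<And>k. k < n \<Longrightarrow> prob {\<omega> \<in> space M. chi k \<omega> = 1} = \<theta>"
    and integrable_R: "\<And>k. k < n \<Longrightarrow> integrable M (R k)"
    and expectation_R: "\<And>k. k < n \<Longrightarrow> expectation (R k) = 0"
    and expectation_abs_R: "\<And>k. k < n \<Longrightarrow> expectation (\<lambda>\<omega>. \<bar>R k \<omega>\<bar>) = \<mu>"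
begin

definition count_others :: "nat \<Rightarrow> 'a \<Rightarrow> real" where
  "count_others k \<omega> = (\<Sum>l\<in>{..<n}-{k}. chi l \<omega>)"

lemma measurable_entries:
  assumes "k < n"
  shows measurable_chi: "chi k \<in> borel_measurable M" and measurable_R: "R k \<in> borel_measurable M"
proof -
  have "random_variable borel ((\<lambda>(b, k). if b then chi k else R k) (b, k))" for b
    using indep_entries assms unfolding indep_vars_def by blast
  from this[of True] this[of False] show "chi k \<in> borel_measurable M" "R k \<in> borel_measurable M"
    by simp_all
qed

lemma integrable_chi: "k < n \<Longrightarrow> integrable M (chi k)"
  using chi_01[of k] measurable_chi[of k]
  by (intro integrable_const_bound[where B=1]) (auto elim!: eventually_mono)

lemma expectation_chi: "k < n \<Longrightarrow> expectation (chi k) = \<theta>"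
  using expectation_eq_prob_of_01[OF measurable_chi chi_01] prob_chi by simp

lemma AE_chi_01: "AE \<omega> in M. \<forall>k<n. chi k \<omega> \<in> {0, 1}"
  using chi_01 by (subst AE_all_countable) auto

lemma AE_count_others_nonneg: "AE \<omega> in M. 0 \<le> count_others k \<omega>"
  using AE_chi_01 by eventually_elim (auto simp: count_others_def intro!: sum_nonneg)

lemma indep_vars_weighted_entries:
  "indep_vars (\<lambda>_. borel) (\<lambda>k \<omega>. v k * (chi k \<omega> * R k \<omega>)) {..<n}"
proof -
  define block where "block k = {(True, k), (False, k)}" for k :: nat
  have "indep_vars (\<lambda>k. PiM (block k) (\<lambda>_. borel))
      (\<lambda>k \<omega>. restrict (\<lambda>i. (\<lambda>(b, k). if b then chi k else R k) i \<omega>) (block k)) {..<n}"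
    by (intro indep_vars_restrict[OF indep_entries]) (auto simp: block_def disjoint_family_on_def)
  then have "indep_vars (\<lambda>_. borel)
      (\<lambda>k \<omega>. (\<lambda>y. v k * (y (True, k) * y (False, k)))
               (restrict (\<lambda>i. (\<lambda>(b, k). if b then chi k else R k) i \<omega>) (block k))) {..<n}"
    by (rule indep_vars_compose2) (auto simp: block_def)
  then show ?thesis by (simp add: block_def)
qed

lemma expectation_inverse_sqrt_count_others:
  assumes k: "k < n"
  shows "1 / sqrt (1 + (real n - 1) * \<theta>) \<le> expectation (\<lambda>\<omega>. 1 / sqrt (1 + count_others k \<omega>))"
proof -
  have int: "integrable M (\<lambda>\<omega>. 1 + count_others k \<omega>)"
    unfolding count_others_def by (auto intro!: integrable_chi)
  have "expectation (\<lambda>\<omega>. 1 + count_others k \<omega>) = 1 + (\<Sum>l\<in>{..<n}-{k}. expectation (chi l))"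
    unfolding count_others_def
    by (subst Bochner_Integration.integral_add)
       (auto intro!: integrable_chi Bochner_Integration.integral_sum simp: prob_space)
  also have "\<dots> = 1 + (real n - 1) * \<theta>"
    using k by (simp add: expectation_chi)
  finally have "expectation (\<lambda>\<omega>. 1 + count_others k \<omega>) = 1 + (real n - 1) * \<theta>" .
  moreover have "AE \<omega> in M. 1 \<le> 1 + count_others k \<omega>"
    using AE_count_others_nonneg[of k] by eventually_elim simp
  ultimately show ?thesis using inverse_sqrt_expectation_le[OF int] by simp
qed

lemma expectation_abs_R_chi_div_sqrt:
  assumes k: "k < n"
  shows "\<mu> * \<theta> / sqrt (1 + (real n - 1) * \<theta>)
    \<le> expectation (\<lambda>\<omega>. \<bar>R k \<omega>\<bar> * (chi k \<omega> * (1 / sqrt (1 + count_others k \<omega>))))"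
    (is "_ \<le> expectation (\<lambda>\<omega>. \<bar>R k \<omega>\<bar> * (chi k \<omega> * ?H \<omega>))")
proof -
  let ?Y = "\<lambda>(b, k). if b then chi k else R k"
  let ?g = "\<lambda>y. 1 / sqrt (1 + (\<Sum>l\<in>{..<n}-{k}. y (True, l)))"
  have [measurable]: "?g \<in> borel_measurable (PiM B (\<lambda>_. borel))" if "{True} \<times> ({..<n}-{k}) \<subseteq> B" for B
    using that by (intro borel_measurable_divide borel_measurable_const borel_measurable_add
        borel_measurable_sum measurable_compose[OF _ borel_measurable_sqrt] measurable_component_singleton) auto
  have int_H: "integrable M ?H"
  proof (rule integrable_const_bound[where B=1])
    show "AE \<omega> in M. norm (?H \<omega>) \<le> 1"
      using AE_count_others_nonneg[of k] by eventually_elim simp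
  qed (auto simp: count_others_def intro!: borel_measurable_divide borel_measurable_add
      borel_measurable_sum measurable_compose[OF _ borel_measurable_sqrt] measurable_chi)
  have indep_chi_H: "indep_var borel (chi k) borel ?H"
    by (rule indep_var_of_disjoint_blocks[OF indep_entries, where A="{(True, k)}" and f="\<lambda>y. y (True, k)"
          and B="{True} \<times> ({..<n}-{k})" and g="?g"])
       (use k in \<open>auto simp: count_others_def fun_eq_iff\<close>)
  have indep_R_chiH: "indep_var borel (\<lambda>\<omega>. \<bar>R k \<omega>\<bar>) borel (\<lambda>\<omega>. chi k \<omega> * ?H \<omega>)"
    by (rule indep_var_of_disjoint_blocks[OF indep_entries, where A="{(False, k)}" and f="\<lambda>y. \<bar>y (False, k)\<bar>"
          and B="{True} \<times> {..<n}" and g="\<lambda>y. y (True, k) * ?g y"])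
       (use k in \<open>auto simp: count_others_def fun_eq_iff\<close>)
  have "expectation (\<lambda>\<omega>. \<bar>R k \<omega>\<bar> * (chi k \<omega> * ?H \<omega>)) = \<mu> * (\<theta> * expectation ?H)"
    using indep_var_lebesgue_integral[OF indep_R_chiH] indep_var_integrable[OF indep_chi_H]
      indep_var_lebesgue_integral[OF indep_chi_H] integrable_chi[OF k] integrable_R[OF k] int_H
    by (simp add: expectation_abs_R[OF k] expectation_chi[OF k])
  moreover have "\<mu> \<ge> 0" "\<theta> \<ge> 0"
    using expectation_abs_R[OF k] expectation_chi[OF k] chi_01[OF k]
    by (auto intro!: Bochner_Integration.integral_nonneg_AE elim!: eventually_mono)
  ultimately show ?thesis
    using expectation_inverse_sqrt_count_others[OF k] by (simp add: divide_inverse mult.assoc mult_left_mono)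
qed

lemma indep_chi_R: "k < n \<Longrightarrow> indep_var borel (chi k) borel (R k)"
  by (rule indep_var_of_disjoint_blocks[OF indep_entries, where A="{(True, k)}" and f="\<lambda>y. y (True, k)"
        and B="{(False, k)}" and g="\<lambda>y. y (False, k)"])
     (auto simp: fun_eq_iff)

lemma integrable_abs_R_chi_div_sqrt:
  assumes k: "k < n"
  shows "integrable M (\<lambda>\<omega>. \<bar>R k \<omega>\<bar> * (chi k \<omega> * (1 / sqrt (1 + count_others k \<omega>))))"
proof (rule Bochner_Integration.integrable_bound)
  show "integrable M (\<lambda>\<omega>. \<bar>R k \<omega>\<bar>)" using integrable_R[OF k] by simp
  show "AE \<omega> in M. norm (\<bar>R k \<omega>\<bar> * (chi k \<omega> * (1 / sqrt (1 + count_others k \<omega>)))) \<le> norm \<bar>R k \<omega>\<bar>"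
    using AE_chi_01 AE_count_others_nonneg[of k]
  proof eventually_elim
    case (elim \<omega>)
    then have "\<bar>chi k \<omega> * (1 / sqrt (1 + count_others k \<omega>))\<bar> \<le> 1"
      using k by (auto simp: abs_mult)
    then have "\<bar>R k \<omega>\<bar> * \<bar>chi k \<omega> * (1 / sqrt (1 + count_others k \<omega>))\<bar> \<le> \<bar>R k \<omega>\<bar>"
      by (rule mult_left_le) simp
    then show ?case by (simp add: abs_mult)
  qed
qed (use k in \<open>auto simp: count_others_def intro!: borel_measurable_times borel_measurable_abs
      borel_measurable_divide borel_measurable_add
      borel_measurable_sum measurable_compose[OF _ borel_measurable_sqrt] measurable_chi measurable_R\<close>)

theorem expectation_abs_weighted_sum_ge:
  "\<mu> * \<theta> / (2 * sqrt 3 * sqrt (1 + (real n - 1) * \<theta>)) * (\<Sum>k<n. \<bar>v k\<bar>)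
     \<le> expectation (\<lambda>\<omega>. \<bar>\<Sum>k<n. v k * (chi k \<omega> * R k \<omega>)\<bar>)"
proof -
  define C where "C = 1 + (real n - 1) * \<theta>"
  define X where "X = (\<lambda>k \<omega>. v k * (chi k \<omega> * R k \<omega>))"
  define G where "G = (\<lambda>k \<omega>. \<bar>R k \<omega>\<bar> * (chi k \<omega> * (1 / sqrt (1 + count_others k \<omega>))))"
  have int_X: "integrable M (X k)" and mean_X: "expectation (X k) = 0" if "k < n" for k
    using indep_var_integrable[OF indep_chi_R] indep_var_lebesgue_integral[OF indep_chi_R]
      integrable_chi integrable_R expectation_R that
    by (simp_all add: X_def)
  have int_Gk: "integrable M (G k)" if "k < n" for k
    unfolding G_def using that by (rule integrable_abs_R_chi_div_sqrt)
  then have int_G: "integrable M (\<lambda>\<omega>. \<Sum>k<n. \<bar>v k\<bar> * G k \<omega>)" by auto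
  have "\<mu> * \<theta> / sqrt C * (\<Sum>k<n. \<bar>v k\<bar>) = (\<Sum>k<n. \<bar>v k\<bar> * (\<mu> * \<theta> / sqrt C))"
    by (simp add: sum_distrib_left mult.commute)
  also have "\<dots> \<le> (\<Sum>k<n. \<bar>v k\<bar> * expectation (G k))"
    unfolding G_def C_def by (intro sum_mono mult_left_mono expectation_abs_R_chi_div_sqrt) auto
  also have "\<dots> = expectation (\<lambda>\<omega>. \<Sum>k<n. \<bar>v k\<bar> * G k \<omega>)"
    by (subst Bochner_Integration.integral_sum) (auto intro: int_Gk)
  also have "\<dots> \<le> expectation (\<lambda>\<omega>. L2_set (\<lambda>k. X k \<omega>) {..<n})"
  proof (rule integral_mono_AE[OF int_G])
    have lhs: "\<bar>v k\<bar> * G k \<omega> = \<bar>v k * R k \<omega>\<bar> * chi k \<omega> / sqrt (1 + (\<Sum>l\<in>{..<n}-{k}. chi l \<omega>))"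
      for k \<omega> by (simp add: G_def count_others_def abs_mult)
    have rhs: "L2_set (\<lambda>k. X k \<omega>) {..<n} = L2_set (\<lambda>k. v k * R k \<omega> * chi k \<omega>) {..<n}" for \<omega>
      by (simp add: X_def ac_simps)
    show "AE \<omega> in M. (\<Sum>k<n. \<bar>v k\<bar> * G k \<omega>) \<le> L2_set (\<lambda>k. X k \<omega>) {..<n}"
      using AE_chi_01 by eventually_elim (simp add: lhs rhs sum_abs_div_sqrt_count_le_L2_set)
    show "integrable M (\<lambda>\<omega>. L2_set (\<lambda>k. X k \<omega>) {..<n})"
      using int_X by (intro integrable_L2_set) auto
  qed
  also have "\<dots> \<le> 2 * sqrt 3 * expectation (\<lambda>\<omega>. \<bar>\<Sum>k<n. X k \<omega>\<bar>)"
    by (rule expectation_L2_set_le[OF _ int_X mean_X]) (simp add: X_def indep_vars_weighted_entries)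
  finally have bound: "\<mu> * \<theta> / sqrt C * (\<Sum>k<n. \<bar>v k\<bar>) \<le> 2 * sqrt 3 * expectation (\<lambda>\<omega>. \<bar>\<Sum>k<n. X k \<omega>\<bar>)" .
  have "\<mu> * \<theta> / (2 * sqrt 3 * sqrt C) * (\<Sum>k<n. \<bar>v k\<bar>) = \<mu> * \<theta> / sqrt C * (\<Sum>k<n. \<bar>v k\<bar>) / (2 * sqrt 3)"
    by simp
  also have "\<dots> \<le> expectation (\<lambda>\<omega>. \<bar>\<Sum>k<n. X k \<omega>\<bar>)"
    using bound by (subst pos_divide_le_eq) (auto simp: mult.commute)
  finally show ?thesis by (simp add: X_def C_def)
qed

end

lemma integral_comp_eq_of_distr_eq:
  fixes f :: "real \<Rightarrow> real"
  assumes [measurable]: "X \<in> borel_measurable M" "Y \<in> borel_measurable M" "f \<in> borel_measurable borel"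
    and eq: "distr M borel X = distr M borel Y"
  shows "(\<integral>\<omega>. f (X \<omega>) \<partial>M) = (\<integral>\<omega>. f (Y \<omega>) \<partial>M)"
proof -
  have "(\<integral>\<omega>. f (X \<omega>) \<partial>M) = (\<integral>x. f x \<partial>distr M borel X)" by (simp add: integral_distr)
  also have "\<dots> = (\<integral>\<omega>. f (Y \<omega>) \<partial>M)" unfolding eq by (simp add: integral_distr)
  finally show ?thesis .
qed

lemma bernoulli_subgaussian_column:
  assumes model: "bernoulli_subgaussian M n p \<theta> chi R" and j: "j < p" and n: "0 < n"
  shows "bernoulli_column M n \<theta> (\<integral>\<omega>. \<bar>R 0 0 \<omega>\<bar> \<partial>M) (\<lambda>k. chi k j) (\<lambda>k. R k j)"
proof -
  interpret prob_space M using model by (simp add: bernoulli_subgaussian_def)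
  let ?Y = "\<lambda>(b, k, l). if b then chi k l else R k l"
  have indep: "indep_vars (\<lambda>_. borel) ?Y (UNIV \<times> {..<n} \<times> {..<p})"
    using model by (simp add: bernoulli_subgaussian_def)
  have measurable_R: "R k l \<in> borel_measurable M" if "k < n" "l < p" for k l
  proof -
    have "random_variable borel (?Y (False, k, l))" using indep that unfolding indep_vars_def by blast
    then show ?thesis by simp
  qed
  have "indep_vars (\<lambda>_. borel) (\<lambda>i. ?Y ((\<lambda>(b, k). (b, k, j)) i)) (UNIV \<times> {..<n})"
    using j by (intro indep_vars_reindex[OF indep]) (auto simp: inj_on_def)
  moreover have "(\<lambda>i. ?Y ((\<lambda>(b, k). (b, k, j)) i)) = (\<lambda>(b, k). if b then chi k j else R k j)"
    by (auto simp: fun_eq_iff)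
  ultimately have indep_column: "indep_vars (\<lambda>_. borel) (\<lambda>(b, k). if b then chi k j else R k j) (UNIV \<times> {..<n})"
    by simp
  show ?thesis
  proof unfold_locales
    show "indep_vars (\<lambda>_. borel) (\<lambda>(b, k). if b then chi k j else R k j) (UNIV \<times> {..<n})"
      by (rule indep_column)
    fix k assume k: "k < n"
    then show "AE \<omega> in M. chi k j \<omega> \<in> {0, 1}" "prob {\<omega> \<in> space M. chi k j \<omega> = 1} = \<theta>"
        "integrable M (R k j)" "expectation (R k j) = 0"
      using model j by (simp_all add: bernoulli_subgaussian_def)
    show "expectation (\<lambda>\<omega>. \<bar>R k j \<omega>\<bar>) = expectation (\<lambda>\<omega>. \<bar>R 0 0 \<omega>\<bar>)"
    proof (rule integral_comp_eq_of_distr_eq[where f=abs])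
      show "distr M borel (R k j) = distr M borel (R 0 0)"
        using model k j n unfolding bernoulli_subgaussian_def by blast
    qed (use k j n measurable_R in auto)
  qed
qed

theorem lemma2:
  fixes M :: "'a measure" and n p j :: nat and \<theta> \<mu> :: real
    and chi R :: "nat \<Rightarrow> nat \<Rightarrow> 'a \<Rightarrow> real" and v :: "nat \<Rightarrow> real"
  assumes model: "bernoulli_subgaussian M n p \<theta> chi R"
    and theta_lo: "2 / real n \<le> \<theta>" and theta_hi: "\<theta> \<le> 1"
    and j: "j < p"
    and mu: "\<mu> = integral\<^sup>L M (\<lambda>\<omega>. \<bar>R 0 0 \<omega>\<bar>)"
  shows "integral\<^sup>L M (\<lambda>\<omega>. \<bar>\<Sum>k<n. v k * (chi k j \<omega> * R k j \<omega>)\<bar>)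
           \<ge> \<mu> / 8 * sqrt (\<theta> / real n) * (\<Sum>k<n. \<bar>v k\<bar>)"
proof (cases "n = 0")
  case True then show ?thesis by simp
next
  case False
  then interpret bernoulli_column M n \<theta> \<mu> "\<lambda>k. chi k j" "\<lambda>k. R k j"
    using bernoulli_subgaussian_column[OF model j] mu by simp
  have "0 \<le> \<mu>" unfolding mu by simp
  have const: "\<mu> * (sqrt (\<theta> / real n) / 8) \<le> \<mu> * (\<theta> / (2 * sqrt 3 * sqrt (1 + (real n - 1) * \<theta>)))"
    using mult_left_mono[OF sqrt_div_le_bernoulli_constant[OF _ theta_lo] \<open>0 \<le> \<mu>\<close>] False by simp
  have "\<mu> / 8 * sqrt (\<theta> / real n) * (\<Sum>k<n. \<bar>v k\<bar>) = \<mu> * (sqrt (\<theta> / real n) / 8) * (\<Sum>k<n. \<bar>v k\<bar>)"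
    by simp
  also have "\<dots> \<le> \<mu> * (\<theta> / (2 * sqrt 3 * sqrt (1 + (real n - 1) * \<theta>))) * (\<Sum>k<n. \<bar>v k\<bar>)"
    using const by (rule mult_right_mono) (simp add: sum_nonneg)
  also have "\<dots> \<le> expectation (\<lambda>\<omega>. \<bar>\<Sum>k<n. v k * (chi k j \<omega> * R k j \<omega>)\<bar>)"
    using expectation_abs_weighted_sum_ge[of v] by simp
  finally show ?thesis .
qed

end
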